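(* Let $n\ge2$ and let $e\in\mathcal{I}^{\ast}_n$ be an idempotent of rank $n-1$ (that is, $e$ has one block $\{x,y,x',y'\}$ with $x\ne y$ and blocks $\{t,t'\}$ for all $t\ne x,y$). Then the maximal subgroup $G(e)$ of $\mathcal{I}^{\ast}_n$ with identity $e$ is an isolated subsemigroup of $\mathcal{I}^{\ast}_n$.
   Context: Let $X=\{1,\dots,n\}$, $X'=\{1',\dots,n'\}$. $\mathcal{I}^{\ast}_n$ is the set of partitions of $X\cup X'$ all of whose blocks meet both $X$ and $X'$, with product: regard $\alpha$ as a partition of $X\cup X''$ and $\beta$ as a partition of $X''\cup X'$ ($X''$ a third copy of $X$), and let $\alpha\beta$ be the partition of $X\cup X'$ induced by the equivalence on $X\cup X''\cup X'$ generated by the blocks of both. Rank = number of blocks. $G(e)$ is the $\mathcal{H}$-class of $e$. A subsemigroup $T$ of a semigroup $S$ is isolated if for all $a\in S$ and $k\ge1$, $a^k\in T$ implies $a\in T$. *)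

theory Defs
  imports Main
begin

(* Points of X \<union> X': Inl i is i \<in> X, Inr i is i' \<in> X', for i \<in> {1..n}. *)
definition pts :: "nat \<Rightarrow> (nat + nat) set" where
  "pts n = Inl ` {1..n} \<union> Inr ` {1..n}"

(* A partition of X \<union> X' is represented by its equivalence relation.
   I*_n: partitions all of whose blocks meet both X and X'. *)
definition Istar :: "nat \<Rightarrow> ((nat + nat) \<times> (nat + nat)) set set" where
  "Istar n = {r. equiv (pts n) r \<and>
      (\<forall>a \<in> pts n. (\<exists>i\<in>{1..n}. (a, Inl i) \<in> r) \<and> (\<exists>j\<in>{1..n}. (a, Inr j) \<in> r))}"

(* Three copies: (0,i) = i \<in> X, (1,i) = i'' \<in> X'', (2,i) = i' \<in> X'. *)
fun embL :: "nat + nat \<Rightarrow> nat \<times> nat" where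
  "embL (Inl i) = (0, i)" | "embL (Inr i) = (1, i)"

fun embR :: "nat + nat \<Rightarrow> nat \<times> nat" where
  "embR (Inl i) = (1, i)" | "embR (Inr i) = (2, i)"

fun embO :: "nat + nat \<Rightarrow> nat \<times> nat" where
  "embO (Inl i) = (0, i)" | "embO (Inr i) = (2, i)"

(* Product: alpha on X \<union> X'', beta on X'' \<union> X', join the generated equivalence,
   and restrict to X \<union> X'. *)
definition pmult :: "nat \<Rightarrow> ((nat + nat) \<times> (nat + nat)) set
    \<Rightarrow> ((nat + nat) \<times> (nat + nat)) set \<Rightarrow> ((nat + nat) \<times> (nat + nat)) set" where
  "pmult n \<alpha> \<beta> = {(a, b). a \<in> pts n \<and> b \<in> pts n \<and>
      (embO a, embO b) \<in> ((\<lambda>(x, y). (embL x, embL y)) ` \<alpha> \<union>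
                          (\<lambda>(x, y). (embR x, embR y)) ` \<beta>)\<^sup>*}"

definition prank :: "nat \<Rightarrow> ((nat + nat) \<times> (nat + nat)) set \<Rightarrow> nat" where
  "prank n r = card (pts n // r)"

definition in_right_S1 :: "'a set \<Rightarrow> ('a \<Rightarrow> 'a \<Rightarrow> 'a) \<Rightarrow> 'a \<Rightarrow> 'a \<Rightarrow> bool" where
  "in_right_S1 S m a b \<longleftrightarrow> a = b \<or> (\<exists>s\<in>S. a = m b s)"

definition in_left_S1 :: "'a set \<Rightarrow> ('a \<Rightarrow> 'a \<Rightarrow> 'a) \<Rightarrow> 'a \<Rightarrow> 'a \<Rightarrow> bool" where
  "in_left_S1 S m a b \<longleftrightarrow> a = b \<or> (\<exists>s\<in>S. a = m s b)"

definition Hclass :: "'a set \<Rightarrow> ('a \<Rightarrow> 'a \<Rightarrow> 'a) \<Rightarrow> 'a \<Rightarrow> 'a set" where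
  "Hclass S m e = {a \<in> S. in_right_S1 S m a e \<and> in_right_S1 S m e a \<and>
                           in_left_S1 S m a e \<and> in_left_S1 S m e a}"

fun spow :: "('a \<Rightarrow> 'a \<Rightarrow> 'a) \<Rightarrow> 'a \<Rightarrow> nat \<Rightarrow> 'a" where
  "spow m a 0 = undefined"
| "spow m a (Suc 0) = a"
| "spow m a (Suc (Suc k)) = m (spow m a (Suc k)) a"

definition subsemigroup :: "'a set \<Rightarrow> ('a \<Rightarrow> 'a \<Rightarrow> 'a) \<Rightarrow> 'a set \<Rightarrow> bool" where
  "subsemigroup S m T \<longleftrightarrow> T \<subseteq> S \<and> (\<forall>a\<in>T. \<forall>b\<in>T. m a b \<in> T)"

definition isolated :: "'a set \<Rightarrow> ('a \<Rightarrow> 'a \<Rightarrow> 'a) \<Rightarrow> 'a set \<Rightarrow> bool" where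
  "isolated S m T \<longleftrightarrow> (\<forall>a\<in>S. \<forall>k\<ge>1. spow m a k \<in> T \<longrightarrow> a \<in> T)"

end

(* A bipartition a is described by three relations on {1..n}: its kernel ker a (the trace of
   its blocks on X), its cokernel coker a (the trace on X') and cross a, relating i to j when
   i and j' share a block. Since every block meets both X and X', ker a and coker a both have
   rank a classes. If coker a = ker b, gluing a and b along X'' merges no two blocks of a, so
   ker (ab) = ker a, coker (ab) = coker b and cross (ab) = cross a O cross b.
   An idempotent e satisfies ker e = coker e = cross e, and then its H-class is the set of all
   a with ker a = ker e and coker a = coker e, which is closed under products by the above.
   For isolation note that ker a and coker a refine the kernel and cokernel of every power
   a^k, so rank a >= rank a^k = n - 1. Rank n would make ker a and coker a trivial, and then
   all powers of a would have trivial kernel, too. Hence a has rank n - 1, and both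
   refinements are equalities. *)

theory Submission
  imports Defs
begin

section \<open>Counting equivalence classes\<close>

lemma equiv_inv_image: "equiv A r \<Longrightarrow> equiv (f -` A) (inv_image r f)"
  unfolding equiv_def refl_on_def by (auto intro: sym_inv_image trans_inv_image)

lemma card_quotient_inv_image:
  assumes r: "equiv A r" and meets: "\<And>a. a \<in> A \<Longrightarrow> \<exists>b. f b \<in> A \<and> (a, f b) \<in> r"
  shows "card (A // r) = card ((f -` A) // inv_image r f)"
proof -
  have class_rep: "\<exists>b. f b \<in> A \<and> X = r `` {f b}" if "X \<in> A // r" for X
  proof -
    obtain a where "a \<in> A" "X = r `` {a}"
      using \<open>X \<in> A // r\<close> by (rule quotientE)
    with meets[of a] equiv_class_eq[OF r] show ?thesis
      by blast
  qed
  have vimage_class: "f -` (r `` {f b}) = inv_image r f `` {b}" for b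
    by auto
  have "bij_betw (\<lambda>X. f -` X) (A // r) ((f -` A) // inv_image r f)"
  proof (rule bij_betw_imageI)
    show "inj_on (\<lambda>X. f -` X) (A // r)"
    proof (rule inj_onI)
      fix X Y
      assume X: "X \<in> A // r" and Y: "Y \<in> A // r" and eq: "f -` X = f -` Y"
      obtain b where b: "f b \<in> A" "X = r `` {f b}"
        using class_rep[OF X] by blast
      then have "f b \<in> X \<inter> Y"
        using eq equiv_class_self[OF r] by blast
      then show "X = Y"
        using quotient_disj[OF r X Y] by blast
    qed
    show "(\<lambda>X. f -` X) ` (A // r) = (f -` A) // inv_image r f"
    proof (intro subsetI antisym)
      fix C assume "C \<in> (\<lambda>X. f -` X) ` (A // r)"
      then obtain b where "f b \<in> A" "C = f -` (r `` {f b})"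
        using class_rep by blast
      then show "C \<in> (f -` A) // inv_image r f"
        by (simp add: vimage_class quotientI)
    next
      fix C assume "C \<in> (f -` A) // inv_image r f"
      then obtain b where "f b \<in> A" "C = f -` (r `` {f b})"
        by (auto simp: vimage_class elim!: quotientE)
      then show "C \<in> (\<lambda>X. f -` X) ` (A // r)"
        by (simp add: quotientI)
    qed
  qed
  then show ?thesis
    by (rule bij_betw_same_card)
qed

lemma equiv_eq_if_card_quotient_le:
  assumes "finite A" and R: "equiv A R" and S: "equiv A S" and "R \<subseteq> S"
    and card_le: "card (A // R) \<le> card (A // S)"
  shows "R = S"
proof
  let ?g = "\<lambda>X. S `` X"
  have image: "?g ` (A // R) = A // S"
    by (rule refines_equiv_image_eq[OF \<open>R \<subseteq> S\<close> R S])
  have fin: "finite (A // R)"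
    using \<open>finite A\<close> R by (simp add: equiv_def finite_quotient)
  have "card (?g ` (A // R)) = card (A // R)"
    using card_le card_image_le[OF fin, of ?g] image by simp
  then have inj: "inj_on ?g (A // R)"
    by (rule eq_card_imp_inj_on[OF fin])
  show "S \<subseteq> R"
  proof
    fix p assume "p \<in> S"
    obtain a b where "p = (a, b)"
      by (cases p)
    with \<open>p \<in> S\<close> have ab: "a \<in> A" "b \<in> A" "S `` {a} = S `` {b}"
      using equiv_class_eq_iff[OF S] by auto
    then have "?g (R `` {a}) = ?g (R `` {b})"
      using refines_equiv_class_eq2[OF \<open>R \<subseteq> S\<close> R S] by simp
    then have "R `` {a} = R `` {b}"
      using inj_onD[OF inj] quotientI[OF ab(1)] quotientI[OF ab(2)] by blast
    then show "p \<in> R"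
      using eq_equiv_class_iff[OF R] ab \<open>p = (a, b)\<close> by simp
  qed
qed (rule \<open>R \<subseteq> S\<close>)

lemma card_quotient_le_card: "finite A \<Longrightarrow> card (A // r) \<le> card A"
  unfolding quotient_def by (metis UNION_singleton_eq_range card_image_le)

lemma card_quotient_Id_on: "card (A // Id_on A) = card A"
proof -
  have "A // Id_on A = (\<lambda>a. {a}) ` A"
    unfolding quotient_def by auto
  then show ?thesis
    by (simp add: card_image)
qed

lemma equiv_eq_Id_on_if_card_quotient:
  assumes "finite A" "equiv A r" "card A \<le> card (A // r)"
  shows "r = Id_on A"
proof -
  have "equiv A (Id_on A)"
    by (auto simp: equiv_def refl_on_def sym_def trans_def)
  moreover have "Id_on A \<subseteq> r"
    using \<open>equiv A r\<close> by (auto simp: equiv_def refl_on_def)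
  ultimately show ?thesis
    using equiv_eq_if_card_quotient_le[of A "Id_on A" r] assms card_quotient_Id_on[of A] by simp
qed

section \<open>Bipartitions\<close>

type_synonym bipartition = "((nat + nat) \<times> (nat + nat)) set"

lemma pts_simps [simp]:
  "Inl i \<in> pts n \<longleftrightarrow> i \<in> {1..n}" "Inr i \<in> pts n \<longleftrightarrow> i \<in> {1..n}"
  by (auto simp: pts_def)

lemma vimage_pts [simp]: "Inl -` pts n = {1..n}" "Inr -` pts n = {1..n}"
  by auto

lemma Istar_equiv: "r \<in> Istar n \<Longrightarrow> equiv (pts n) r"
  by (simp add: Istar_def)

lemma Istar_in_pts: "r \<in> Istar n \<Longrightarrow> (p, q) \<in> r \<Longrightarrow> p \<in> pts n \<and> q \<in> pts n"
  using Istar_equiv[of r n] unfolding equiv_def refl_on_def by blast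

lemma Istar_refl: "r \<in> Istar n \<Longrightarrow> p \<in> pts n \<Longrightarrow> (p, p) \<in> r"
  using Istar_equiv[of r n] unfolding equiv_def refl_on_def by blast

lemma Istar_sym: "r \<in> Istar n \<Longrightarrow> (p, q) \<in> r \<Longrightarrow> (q, p) \<in> r"
  using Istar_equiv[of r n] unfolding equiv_def sym_def by blast

lemma Istar_trans: "r \<in> Istar n \<Longrightarrow> (p, q) \<in> r \<Longrightarrow> (q, s) \<in> r \<Longrightarrow> (p, s) \<in> r"
  using Istar_equiv[of r n] unfolding equiv_def trans_def by blast

lemma Istar_ex_Inl: "r \<in> Istar n \<Longrightarrow> p \<in> pts n \<Longrightarrow> \<exists>i\<in>{1..n}. (p, Inl i) \<in> r"
  by (simp add: Istar_def)

lemma Istar_ex_Inr: "r \<in> Istar n \<Longrightarrow> p \<in> pts n \<Longrightarrow> \<exists>j\<in>{1..n}. (p, Inr j) \<in> r"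
  by (simp add: Istar_def)

definition ker :: "bipartition \<Rightarrow> nat rel" where
  "ker r = inv_image r Inl"

definition coker :: "bipartition \<Rightarrow> nat rel" where
  "coker r = inv_image r Inr"

definition cross :: "bipartition \<Rightarrow> nat rel" where
  "cross r = {(i, j). (Inl i, Inr j) \<in> r}"

lemma in_ker [simp]: "(i, j) \<in> ker r \<longleftrightarrow> (Inl i, Inl j) \<in> r"
  and in_coker [simp]: "(i, j) \<in> coker r \<longleftrightarrow> (Inr i, Inr j) \<in> r"
  and in_cross [simp]: "(i, j) \<in> cross r \<longleftrightarrow> (Inl i, Inr j) \<in> r"
  by (simp_all add: ker_def coker_def cross_def)

lemma bipartition_eqI:
  assumes "x \<in> Istar n" "y \<in> Istar n"
    and "ker x = ker y" "coker x = coker y" "cross x = cross y"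
  shows "x = y"
proof -
  have "(p, q) \<in> s" if "(p, q) \<in> r" "r \<in> Istar n" "s \<in> Istar n"
    and "ker r = ker s" "coker r = coker s" "cross r = cross s" for r s p q
  proof (cases p; cases q)
    fix i j assume "p = Inr j" "q = Inl i"
    then have "(i, j) \<in> cross r"
      using Istar_sym[OF that(2) that(1)] by simp
    then have "(i, j) \<in> cross s"
      using \<open>cross r = cross s\<close> by simp
    then show ?thesis
      using Istar_sym[OF that(3)] \<open>p = Inr j\<close> \<open>q = Inl i\<close> by simp
  qed (use that in \<open>auto simp: set_eq_iff\<close>)
  then show ?thesis
    using assms by auto
qed

lemma ker_equiv: "r \<in> Istar n \<Longrightarrow> equiv {1..n} (ker r)"
  and coker_equiv: "r \<in> Istar n \<Longrightarrow> equiv {1..n} (coker r)"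
  using equiv_inv_image[OF Istar_equiv, of r n Inl] equiv_inv_image[OF Istar_equiv, of r n Inr]
  by (simp_all add: ker_def coker_def)

lemma prank_eq_card_ker:
  assumes "r \<in> Istar n" shows "prank n r = card ({1..n} // ker r)"
proof -
  have "card (pts n // r) = card ((Inl -` pts n) // inv_image r Inl)"
    by (rule card_quotient_inv_image[OF Istar_equiv[OF assms]])
      (metis Istar_ex_Inl[OF assms] pts_simps(1))
  then show ?thesis
    by (simp add: prank_def ker_def)
qed

lemma prank_eq_card_coker:
  assumes "r \<in> Istar n" shows "prank n r = card ({1..n} // coker r)"
proof -
  have "card (pts n // r) = card ((Inr -` pts n) // inv_image r Inr)"
    by (rule card_quotient_inv_image[OF Istar_equiv[OF assms]])
      (metis Istar_ex_Inr[OF assms] pts_simps(2))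
  then show ?thesis
    by (simp add: prank_def coker_def)
qed

lemma Istar_Domain_cross:
  assumes "r \<in> Istar n" shows "Domain (cross r) = {1..n}"
proof (intro equalityI subsetI)
  fix i assume "i \<in> Domain (cross r)"
  then obtain j where ij: "(Inl i, Inr j) \<in> r"
    by auto
  show "i \<in> {1..n}"
    using Istar_in_pts[OF assms ij] by simp
next
  fix i assume "i \<in> {1..n}"
  then obtain j where "(Inl i, Inr j) \<in> r"
    using Istar_ex_Inr[OF assms, of "Inl i"] by auto
  then show "i \<in> Domain (cross r)"
    by (simp add: DomainI)
qed

lemma Istar_Range_cross:
  assumes "r \<in> Istar n" shows "Range (cross r) = {1..n}"
proof (intro equalityI subsetI)
  fix j assume "j \<in> Range (cross r)"
  then obtain i where ij: "(Inl i, Inr j) \<in> r"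
    by auto
  show "j \<in> {1..n}"
    using Istar_in_pts[OF assms ij] by simp
next
  fix j assume "j \<in> {1..n}"
  then obtain i where "(Inr j, Inl i) \<in> r"
    using Istar_ex_Inl[OF assms, of "Inr j"] by auto
  then have "(i, j) \<in> cross r"
    using Istar_sym[OF assms] by simp
  then show "j \<in> Range (cross r)"
    by (rule RangeI)
qed

lemma IstarI:
  assumes r: "equiv (pts n) r"
    and dom: "{1..n} \<subseteq> Domain (cross r)" and ran: "{1..n} \<subseteq> Range (cross r)"
  shows "r \<in> Istar n"
proof -
  have refl: "(a, a) \<in> r" if "a \<in> pts n" for a
    using r that unfolding equiv_def refl_on_def by blast
  have sym: "(b, a) \<in> r" and in_pts: "a \<in> pts n \<and> b \<in> pts n" if "(a, b) \<in> r" for a b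
    using r that unfolding equiv_def refl_on_def sym_def by blast+
  have "(\<exists>i\<in>{1..n}. (a, Inl i) \<in> r) \<and> (\<exists>j\<in>{1..n}. (a, Inr j) \<in> r)" if a: "a \<in> pts n" for a
  proof (cases a)
    case (Inl i)
    then obtain j where ij: "(Inl i, Inr j) \<in> r"
      using a dom by auto
    have "i \<in> {1..n}" "j \<in> {1..n}"
      using Inl a in_pts[OF ij] by simp_all
    then show ?thesis
      using Inl refl[OF a] ij by blast
  next
    case (Inr j)
    then obtain i where ij: "(Inl i, Inr j) \<in> r"
      using a ran by auto
    have "i \<in> {1..n}" "j \<in> {1..n}"
      using in_pts[OF ij] by simp_all
    then show ?thesis
      using Inr refl[OF a] sym[OF ij] by blast
  qed
  then show ?thesis
    using r by (simp add: Istar_def)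
qed

section \<open>The product\<close>

definition stack :: "bipartition \<Rightarrow> bipartition \<Rightarrow> ((nat \<times> nat) \<times> (nat \<times> nat)) set" where
  "stack x y = map_prod embL embL ` x \<union> map_prod embR embR ` y"

lemma pmult_stack:
  "pmult n x y = {(a, b). a \<in> pts n \<and> b \<in> pts n \<and> (embO a, embO b) \<in> (stack x y)\<^sup>*}"
  by (simp add: pmult_def stack_def map_prod_def)

lemma stackE:
  assumes "(u, v) \<in> stack x y"
  obtains p q where "(p, q) \<in> x" "u = embL p" "v = embL q"
    | p q where "(p, q) \<in> y" "u = embR p" "v = embR q"
  using assms unfolding stack_def by auto

lemma stack_fstI: "(p, q) \<in> x \<Longrightarrow> (embL p, embL q) \<in> stack x y"
  and stack_sndI: "(p, q) \<in> y \<Longrightarrow> (embR p, embR q) \<in> stack x y"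
  unfolding stack_def by force+

lemma equiv_pmult:
  assumes x: "x \<in> Istar n" and y: "y \<in> Istar n"
  shows "equiv (pts n) (pmult n x y)"
proof -
  have "sym (stack x y)"
  proof (rule symI)
    fix u v assume "(u, v) \<in> stack x y"
    then show "(v, u) \<in> stack x y"
      by (cases rule: stackE) (auto intro: stack_fstI stack_sndI Istar_sym[OF x] Istar_sym[OF y])
  qed
  then have "sym ((stack x y)\<^sup>*)"
    by (rule sym_rtrancl)
  then show ?thesis
    unfolding equiv_def refl_on_def sym_def trans_def pmult_stack
    by (blast intro: rtrancl_trans)
qed

lemma cross_relcomp_subset_cross_pmult:
  assumes x: "x \<in> Istar n" and y: "y \<in> Istar n"
  shows "cross x O cross y \<subseteq> cross (pmult n x y)"
proof
  fix p assume "p \<in> cross x O cross y"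
  then obtain i m j where p: "p = (i, j)" and xm: "(Inl i, Inr m) \<in> x" and yj: "(Inl m, Inr j) \<in> y"
    by auto
  have "((0, i), (1, m)) \<in> stack x y" "((1, m), (2, j)) \<in> stack x y"
    using stack_fstI[OF xm, of y] stack_sndI[OF yj, of x] by simp_all
  then have "((0, i), (2, j)) \<in> (stack x y)\<^sup>*"
    by (meson converse_rtrancl_into_rtrancl r_into_rtrancl)
  then show "p \<in> cross (pmult n x y)"
    using p Istar_in_pts[OF x xm] Istar_in_pts[OF y yj] by (simp add: pmult_stack)
qed

lemma Domain_relcomp: "Range R \<subseteq> Domain S \<Longrightarrow> Domain (R O S) = Domain R"
  by blast

lemma Range_relcomp: "Domain S \<subseteq> Range R \<Longrightarrow> Range (R O S) = Range S"
  by blast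

lemma pmult_Istar:
  assumes x: "x \<in> Istar n" and y: "y \<in> Istar n"
  shows "pmult n x y \<in> Istar n"
proof (rule IstarI[OF equiv_pmult[OF x y]])
  have "Domain (cross x O cross y) = {1..n}" "Range (cross x O cross y) = {1..n}"
    by (simp_all add: Domain_relcomp Range_relcomp Istar_Domain_cross[OF x] Istar_Range_cross[OF x]
        Istar_Domain_cross[OF y] Istar_Range_cross[OF y])
  then show "{1..n} \<subseteq> Domain (cross (pmult n x y))" "{1..n} \<subseteq> Range (cross (pmult n x y))"
    using Domain_mono Range_mono cross_relcomp_subset_cross_pmult[OF x y] by metis+
qed

lemma ker_subset_ker_pmult:
  assumes x: "x \<in> Istar n" shows "ker x \<subseteq> ker (pmult n x y)"
proof
  fix p assume "p \<in> ker x"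
  then obtain i j where p: "p = (i, j)" and ij: "(Inl i, Inl j) \<in> x"
    by (cases p) simp
  have "((0, i), (0, j)) \<in> stack x y"
    using stack_fstI[OF ij, of y] by simp
  then show "p \<in> ker (pmult n x y)"
    using p Istar_in_pts[OF x ij] by (auto simp: pmult_stack)
qed

(* Since coker x = ker y, the blocks of x and of y cut X'' into the same pieces, so a y-step
   inside X'' never leaves the x-block one is in. *)
lemma stack_rtrancl_from_top:
  assumes x: "x \<in> Istar n" and y: "y \<in> Istar n" and mid: "coker x = ker y"
    and path: "((0, i), w) \<in> (stack x y)\<^sup>*" and i: "i \<in> {1..n}"
  shows "w \<in> {0} \<times> ker x `` {i} \<union> {1} \<times> cross x `` {i} \<union> {2} \<times> (cross x O cross y) `` {i}"
  using path
proof (induction rule: rtrancl_induct)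
  case base
  show ?case
    using Istar_refl[OF x, of "Inl i"] i by simp
next
  case (step v w)
  have mid': "(Inr a, Inr b) \<in> x \<longleftrightarrow> (Inl a, Inl b) \<in> y" for a b
    using mid by (auto simp: set_eq_iff)
  note tx = Istar_trans[OF x] and ty = Istar_trans[OF y]
  from step.hyps(2) show ?case
  proof (cases rule: stackE)
    case (1 p q)
    then show ?thesis
      using step.IH by (cases p; cases q; simp; blast intro: tx)
  next
    case (2 p q)
    then show ?thesis
      using step.IH
      by (cases p; cases q; simp add: relcomp_unfold; blast intro: tx ty mid'[THEN iffD2])
  qed
qed

lemma ker_pmult:
  assumes x: "x \<in> Istar n" and y: "y \<in> Istar n" and mid: "coker x = ker y"
  shows "ker (pmult n x y) = ker x"
proof
  show "ker (pmult n x y) \<subseteq> ker x"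
  proof
    fix p assume "p \<in> ker (pmult n x y)"
    then obtain i j where p: "p = (i, j)" and i: "i \<in> {1..n}"
      and path: "((0, i), (0, j)) \<in> (stack x y)\<^sup>*"
      by (cases p) (simp add: pmult_stack)
    show "p \<in> ker x"
      using stack_rtrancl_from_top[OF x y mid path i] p by simp
  qed
qed (rule ker_subset_ker_pmult[OF x])

lemma cross_pmult:
  assumes x: "x \<in> Istar n" and y: "y \<in> Istar n" and mid: "coker x = ker y"
  shows "cross (pmult n x y) = cross x O cross y"
proof
  show "cross (pmult n x y) \<subseteq> cross x O cross y"
  proof
    fix p assume "p \<in> cross (pmult n x y)"
    then obtain i j where p: "p = (i, j)" and i: "i \<in> {1..n}"
      and path: "((0, i), (2, j)) \<in> (stack x y)\<^sup>*"
      by (cases p) (simp add: pmult_stack)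
    show "p \<in> cross x O cross y"
      using stack_rtrancl_from_top[OF x y mid path i] p by simp
  qed
qed (rule cross_relcomp_subset_cross_pmult[OF x y])

section \<open>Inversion\<close>

fun mirror :: "nat + nat \<Rightarrow> nat + nat" where
  "mirror (Inl i) = Inr i"
| "mirror (Inr i) = Inl i"

lemma mirror_mirror [simp]: "mirror (mirror p) = p"
  by (cases p) simp_all

lemma mirror_in_pts [simp]: "mirror p \<in> pts n \<longleftrightarrow> p \<in> pts n"
  by (cases p) simp_all

definition pinverse :: "bipartition \<Rightarrow> bipartition" where
  "pinverse r = inv_image r mirror"

lemma in_pinverse [simp]: "(p, q) \<in> pinverse r \<longleftrightarrow> (mirror p, mirror q) \<in> r"
  by (simp add: pinverse_def)

lemma pinverse_pinverse [simp]: "pinverse (pinverse r) = r"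
  by (auto simp: pinverse_def)

lemma pinverse_mono: "r \<subseteq> s \<Longrightarrow> pinverse r \<subseteq> pinverse s"
  by (auto simp: pinverse_def)

lemma ker_pinverse [simp]: "ker (pinverse r) = coker r"
  and coker_pinverse [simp]: "coker (pinverse r) = ker r"
  by (auto simp: ker_def coker_def)

lemma cross_pinverse: "r \<in> Istar n \<Longrightarrow> cross (pinverse r) = (cross r)\<inverse>"
  using Istar_sym[of r n] by (auto simp: cross_def)

lemma pinverse_Istar:
  assumes "r \<in> Istar n" shows "pinverse r \<in> Istar n"
proof (rule IstarI)
  show "equiv (pts n) (pinverse r)"
    using equiv_inv_image[OF Istar_equiv[OF assms], of mirror] by (simp add: pinverse_def vimage_def)
  show "{1..n} \<subseteq> Domain (cross (pinverse r))" "{1..n} \<subseteq> Range (cross (pinverse r))"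
    by (simp_all add: cross_pinverse[OF assms] Istar_Domain_cross[OF assms] Istar_Range_cross[OF assms])
qed

fun flip_level :: "nat \<times> nat \<Rightarrow> nat \<times> nat" where
  "flip_level (l, i) = (2 - l, i)"

lemma flip_level_emb:
  "embL (mirror p) = flip_level (embR p)"
  "embR (mirror p) = flip_level (embL p)"
  "embO (mirror p) = flip_level (embO p)"
  by (cases p; simp)+

lemma stack_rtrancl_flip_level:
  assumes "(u, v) \<in> (stack x y)\<^sup>*"
  shows "(flip_level u, flip_level v) \<in> (stack (pinverse y) (pinverse x))\<^sup>*"
  using assms
proof (induction rule: rtrancl_induct)
  case (step v w)
  from step.hyps(2) have "(flip_level v, flip_level w) \<in> stack (pinverse y) (pinverse x)"
  proof (cases rule: stackE)
    case (1 p q)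
    then show ?thesis
      using stack_sndI[of "mirror p" "mirror q" "pinverse x" "pinverse y"] by (simp add: flip_level_emb)
  next
    case (2 p q)
    then show ?thesis
      using stack_fstI[of "mirror p" "mirror q" "pinverse y" "pinverse x"] by (simp add: flip_level_emb)
  qed
  with step.IH show ?case
    by (rule rtrancl_into_rtrancl)
qed simp

lemma pmult_subset_pinverse_pmult: "pmult n x y \<subseteq> pinverse (pmult n (pinverse y) (pinverse x))"
  by (auto simp: pmult_stack flip_level_emb dest: stack_rtrancl_flip_level)

lemma pinverse_pmult: "pinverse (pmult n x y) = pmult n (pinverse y) (pinverse x)"
proof
  show "pinverse (pmult n x y) \<subseteq> pmult n (pinverse y) (pinverse x)"
    using pinverse_mono[OF pmult_subset_pinverse_pmult[of n x y]] by simp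
  show "pmult n (pinverse y) (pinverse x) \<subseteq> pinverse (pmult n x y)"
    using pmult_subset_pinverse_pmult[of n "pinverse y" "pinverse x"] by simp
qed

lemma coker_subset_coker_pmult:
  assumes y: "y \<in> Istar n" shows "coker y \<subseteq> coker (pmult n x y)"
proof -
  have "ker (pinverse y) \<subseteq> ker (pmult n (pinverse y) (pinverse x))"
    by (rule ker_subset_ker_pmult[OF pinverse_Istar[OF y]])
  then show ?thesis
    by (simp flip: pinverse_pmult)
qed

lemma coker_pmult:
  assumes x: "x \<in> Istar n" and y: "y \<in> Istar n" and mid: "coker x = ker y"
  shows "coker (pmult n x y) = coker y"
proof -
  have "ker (pmult n (pinverse y) (pinverse x)) = ker (pinverse y)"
    by (rule ker_pmult[OF pinverse_Istar[OF y] pinverse_Istar[OF x]]) (simp add: mid)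
  then show ?thesis
    by (simp flip: pinverse_pmult)
qed

lemma cross_relcomp_converse:
  assumes r: "r \<in> Istar n" shows "cross r O (cross r)\<inverse> = ker r"
proof (intro equalityI subsetI)
  fix p assume "p \<in> cross r O (cross r)\<inverse>"
  then obtain i j m where p: "p = (i, j)" and "(Inl i, Inr m) \<in> r" "(Inl j, Inr m) \<in> r"
    by auto
  then have "(Inl i, Inl j) \<in> r"
    using Istar_trans[OF r] Istar_sym[OF r] by blast
  then show "p \<in> ker r"
    using p by simp
next
  fix p assume "p \<in> ker r"
  then obtain i j where p: "p = (i, j)" and ij: "(Inl i, Inl j) \<in> r"
    by (cases p) simp
  obtain m where im: "(Inl i, Inr m) \<in> r"
    using Istar_ex_Inr[OF r] Istar_in_pts[OF r ij] by blast
  have "(Inl j, Inr m) \<in> r"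
    using Istar_trans[OF r Istar_sym[OF r ij] im] .
  then show "p \<in> cross r O (cross r)\<inverse>"
    using p im by auto
qed

lemma converse_relcomp_cross:
  assumes "r \<in> Istar n" shows "(cross r)\<inverse> O cross r = coker r"
  using cross_relcomp_converse[OF pinverse_Istar[OF assms]] by (simp add: cross_pinverse[OF assms])

lemma ker_relcomp_cross:
  assumes r: "r \<in> Istar n" shows "ker r O cross r = cross r"
proof (intro equalityI subsetI)
  fix p assume "p \<in> ker r O cross r"
  then obtain i j m where p: "p = (i, j)" and im: "(Inl i, Inl m) \<in> r" and mj: "(Inl m, Inr j) \<in> r"
    by auto
  have "(Inl i, Inr j) \<in> r"
    by (rule Istar_trans[OF r im mj])
  then show "p \<in> cross r"
    using p by simp
next
  fix p assume "p \<in> cross r"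
  then obtain i j where p: "p = (i, j)" and ij: "(i, j) \<in> cross r"
    by (cases p) simp
  have "(i, i) \<in> ker r"
    using Istar_refl[OF r] Istar_in_pts[OF r ij[unfolded in_cross]] by simp
  then show "p \<in> ker r O cross r"
    using p ij by (simp add: relcompI)
qed

lemma cross_relcomp_coker:
  assumes r: "r \<in> Istar n" shows "cross r O coker r = cross r"
proof (intro equalityI subsetI)
  fix p assume "p \<in> cross r O coker r"
  then obtain i j m where p: "p = (i, j)" and im: "(Inl i, Inr m) \<in> r" and mj: "(Inr m, Inr j) \<in> r"
    by auto
  have "(Inl i, Inr j) \<in> r"
    by (rule Istar_trans[OF r im mj])
  then show "p \<in> cross r"
    using p by simp
next
  fix p assume "p \<in> cross r"
  then obtain i j where p: "p = (i, j)" and ij: "(i, j) \<in> cross r"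
    by (cases p) simp
  have "(j, j) \<in> coker r"
    using Istar_refl[OF r] Istar_in_pts[OF r ij[unfolded in_cross]] by simp
  then show "p \<in> cross r O coker r"
    using p ij by (simp add: relcompI)
qed

section \<open>Idempotents and their H-classes\<close>

lemma ker_subset_coker_if_idempotent:
  assumes e: "e \<in> Istar n" and idem: "pmult n e e = e"
  shows "ker e \<subseteq> coker e"
proof
  fix p assume "p \<in> ker e"
  then obtain m m' where p: "p = (m, m')" and mm': "(Inl m, Inl m') \<in> e"
    by (cases p) simp
  obtain i where i: "i \<in> {1..n}" "(Inr m, Inl i) \<in> e"
    using Istar_ex_Inl[OF e, of "Inr m"] Istar_in_pts[OF e mm'] by auto
  obtain j where j: "j \<in> {1..n}" "(Inr m', Inl j) \<in> e"
    using Istar_ex_Inl[OF e, of "Inr m'"] Istar_in_pts[OF e mm'] by auto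
  have "((0, i), (1, m)) \<in> stack e e" "((1, m), (1, m')) \<in> stack e e" "((1, m'), (0, j)) \<in> stack e e"
    using stack_fstI[OF Istar_sym[OF e i(2)], of e] stack_sndI[OF mm', of e] stack_fstI[OF j(2), of e]
    by simp_all
  then have "((0, i), (0, j)) \<in> (stack e e)\<^sup>*"
    by (meson converse_rtrancl_into_rtrancl r_into_rtrancl)
  then have "(Inl i, Inl j) \<in> pmult n e e"
    using i j by (simp add: pmult_stack)
  then have "(Inl i, Inl j) \<in> e"
    by (simp add: idem)
  then have "(Inr m, Inr m') \<in> e"
    using Istar_trans[OF e i(2)] Istar_trans[OF e _ Istar_sym[OF e j(2)]] by blast
  then show "p \<in> coker e"
    using p by simp
qed

lemma coker_eq_ker_if_idempotent:
  assumes e: "e \<in> Istar n" and idem: "pmult n e e = e"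
  shows "coker e = ker e"
proof
  show "ker e \<subseteq> coker e"
    by (rule ker_subset_coker_if_idempotent[OF e idem])
  have "pmult n (pinverse e) (pinverse e) = pinverse e"
    by (simp flip: pinverse_pmult add: idem)
  then have "ker (pinverse e) \<subseteq> coker (pinverse e)"
    by (rule ker_subset_coker_if_idempotent[OF pinverse_Istar[OF e]])
  then show "coker e \<subseteq> ker e"
    by simp
qed

lemma cross_eq_ker_if_idempotent:
  assumes e: "e \<in> Istar n" and idem: "pmult n e e = e"
  shows "cross e = ker e"
proof -
  have coker_e: "coker e = ker e"
    by (rule coker_eq_ker_if_idempotent[OF e idem])
  have "cross e = ker e O cross e"
    by (simp add: ker_relcomp_cross[OF e])
  also have "\<dots> = (cross e)\<inverse> O (cross e O cross e)"
    by (simp add: converse_relcomp_cross[OF e] coker_e flip: O_assoc)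
  also have "cross e O cross e = cross e"
    using cross_pmult[OF e e coker_e] by (simp add: idem)
  finally show ?thesis
    by (simp add: converse_relcomp_cross[OF e] coker_e)
qed

definition ker_coker_class :: "nat \<Rightarrow> nat rel \<Rightarrow> nat rel \<Rightarrow> bipartition set" where
  "ker_coker_class n K C = {a \<in> Istar n. ker a = K \<and> coker a = C}"

lemma subsemigroup_ker_coker_class: "subsemigroup (Istar n) (pmult n) (ker_coker_class n K K)"
  unfolding subsemigroup_def ker_coker_class_def
  by (auto simp: pmult_Istar ker_pmult coker_pmult)

lemma Hclass_subset_ker_coker_class:
  assumes e: "e \<in> Istar n"
  shows "Hclass (Istar n) (pmult n) e \<subseteq> ker_coker_class n (ker e) (coker e)"
proof
  fix a assume "a \<in> Hclass (Istar n) (pmult n) e"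
  then have a: "a \<in> Istar n"
    and ae: "in_right_S1 (Istar n) (pmult n) a e" and ea: "in_right_S1 (Istar n) (pmult n) e a"
    and ae': "in_left_S1 (Istar n) (pmult n) a e" and ea': "in_left_S1 (Istar n) (pmult n) e a"
    by (auto simp: Hclass_def)
  have "ker e \<subseteq> ker a"
    using ae unfolding in_right_S1_def by (elim disjE bexE) (simp_all add: ker_subset_ker_pmult[OF e])
  moreover have "ker a \<subseteq> ker e"
    using ea unfolding in_right_S1_def by (elim disjE bexE) (simp_all add: ker_subset_ker_pmult[OF a])
  moreover have "coker e \<subseteq> coker a"
    using ae' unfolding in_left_S1_def by (elim disjE bexE) (simp_all add: coker_subset_coker_pmult[OF e])
  moreover have "coker a \<subseteq> coker e"
    using ea' unfolding in_left_S1_def by (elim disjE bexE) (simp_all add: coker_subset_coker_pmult[OF a])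
  ultimately show "a \<in> ker_coker_class n (ker e) (coker e)"
    using a by (simp add: ker_coker_class_def)
qed

lemma ker_coker_class_subset_Hclass:
  assumes e: "e \<in> Istar n" and idem: "pmult n e e = e"
  shows "ker_coker_class n (ker e) (coker e) \<subseteq> Hclass (Istar n) (pmult n) e"
proof
  fix a assume "a \<in> ker_coker_class n (ker e) (coker e)"
  have coker_e: "coker e = ker e" and cross_e: "cross e = ker e"
    using coker_eq_ker_if_idempotent[OF e idem] cross_eq_ker_if_idempotent[OF e idem] .
  with \<open>a \<in> ker_coker_class n (ker e) (coker e)\<close>
  have a: "a \<in> Istar n" and ker_a: "ker a = ker e" and coker_a: "coker a = ker e"
    by (simp_all add: ker_coker_class_def)
  have a': "pinverse a \<in> Istar n"
    by (rule pinverse_Istar[OF a])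
  have "a = pmult n e a"
  proof (rule sym, rule bipartition_eqI[OF pmult_Istar[OF e a] a])
    have mid: "coker e = ker a"
      by (simp add: coker_e ker_a)
    show "ker (pmult n e a) = ker a" "coker (pmult n e a) = coker a"
      by (simp_all add: ker_pmult[OF e a mid] coker_pmult[OF e a mid] ker_a)
    show "cross (pmult n e a) = cross a"
      using ker_relcomp_cross[OF a] by (simp add: cross_pmult[OF e a mid] cross_e ker_a)
  qed
  moreover have "a = pmult n a e"
  proof (rule sym, rule bipartition_eqI[OF pmult_Istar[OF a e] a])
    have mid: "coker a = ker e"
      by (rule coker_a)
    show "ker (pmult n a e) = ker a" "coker (pmult n a e) = coker a"
      by (simp_all add: ker_pmult[OF a e mid] coker_pmult[OF a e mid] coker_a coker_e)
    show "cross (pmult n a e) = cross a"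
      using cross_relcomp_coker[OF a] by (simp add: cross_pmult[OF a e mid] cross_e coker_a)
  qed
  moreover have "e = pmult n a (pinverse a)"
  proof (rule sym, rule bipartition_eqI[OF pmult_Istar[OF a a'] e])
    have mid: "coker a = ker (pinverse a)"
      by simp
    show "ker (pmult n a (pinverse a)) = ker e" "coker (pmult n a (pinverse a)) = coker e"
      by (simp_all add: ker_pmult[OF a a' mid] coker_pmult[OF a a' mid] ker_a coker_e)
    show "cross (pmult n a (pinverse a)) = cross e"
      by (simp add: cross_pmult[OF a a' mid] cross_pinverse[OF a] cross_relcomp_converse[OF a] ker_a cross_e)
  qed
  moreover have "e = pmult n (pinverse a) a"
  proof (rule sym, rule bipartition_eqI[OF pmult_Istar[OF a' a] e])
    have mid: "coker (pinverse a) = ker a"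
      by simp
    show "ker (pmult n (pinverse a) a) = ker e" "coker (pmult n (pinverse a) a) = coker e"
      by (simp_all add: ker_pmult[OF a' a mid] coker_pmult[OF a' a mid] coker_a coker_e)
    show "cross (pmult n (pinverse a) a) = cross e"
      by (simp add: cross_pmult[OF a' a mid] cross_pinverse[OF a] converse_relcomp_cross[OF a] coker_a cross_e)
  qed
  ultimately show "a \<in> Hclass (Istar n) (pmult n) e"
    unfolding Hclass_def in_right_S1_def in_left_S1_def using a a' e by blast
qed

lemma Hclass_idempotent:
  assumes "e \<in> Istar n" and "pmult n e e = e"
  shows "Hclass (Istar n) (pmult n) e = ker_coker_class n (ker e) (coker e)"
  by (intro equalityI Hclass_subset_ker_coker_class ker_coker_class_subset_Hclass assms)

section \<open>Isolation\<close>

lemma spow_in_subsemigroup: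
  assumes T: "subsemigroup S m T" and "a \<in> T" and "1 \<le> k"
  shows "spow m a k \<in> T"
proof -
  obtain j where k: "k = Suc j"
    using \<open>1 \<le> k\<close> by (cases k) auto
  have "spow m a (Suc j) \<in> T"
    using T \<open>a \<in> T\<close> by (induction j) (simp_all add: subsemigroup_def)
  then show ?thesis
    by (simp add: k)
qed

lemma subsemigroup_coarser_ker_coker:
  "subsemigroup (Istar n) (pmult n) {b \<in> Istar n. ker a \<subseteq> ker b \<and> coker a \<subseteq> coker b}"
  unfolding subsemigroup_def
  using pmult_Istar ker_subset_ker_pmult coker_subset_coker_pmult by blast

lemma prank_le: "r \<in> Istar n \<Longrightarrow> prank n r \<le> n"
  using card_quotient_le_card[of "{1..n}" "ker r"] by (simp add: prank_eq_card_ker)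

lemma ker_coker_eq_Id_on_if_prank_eq:
  assumes r: "r \<in> Istar n" and "prank n r = n"
  shows "ker r = Id_on {1..n}" "coker r = Id_on {1..n}"
proof -
  have "card ({1..n} // ker r) = n" "card ({1..n} // coker r) = n"
    using assms prank_eq_card_ker[OF r] prank_eq_card_coker[OF r] by simp_all
  then show "ker r = Id_on {1..n}" "coker r = Id_on {1..n}"
    using equiv_eq_Id_on_if_card_quotient[OF _ ker_equiv[OF r]]
      equiv_eq_Id_on_if_card_quotient[OF _ coker_equiv[OF r]] by simp_all
qed

lemma isolated_ker_coker_class:
  assumes "n \<noteq> 0" and card_K: "card ({1..n} // K) = n - 1"
  shows "isolated (Istar n) (pmult n) (ker_coker_class n K C)"
  unfolding isolated_def
proof (intro ballI allI impI)
  fix a k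
  assume a: "a \<in> Istar n" and k: "1 \<le> k" and ak: "spow (pmult n) a k \<in> ker_coker_class n K C"
  have "spow (pmult n) a k \<in> {b \<in> Istar n. ker a \<subseteq> ker b \<and> coker a \<subseteq> coker b}"
    by (rule spow_in_subsemigroup[OF subsemigroup_coarser_ker_coker _ k]) (simp add: a)
  with ak have ak': "spow (pmult n) a k \<in> Istar n" and "ker a \<subseteq> K" "coker a \<subseteq> C"
    by (simp_all add: ker_coker_class_def)
  have K: "equiv {1..n} K" and C: "equiv {1..n} C"
    using ker_equiv[OF ak'] coker_equiv[OF ak'] ak by (simp_all add: ker_coker_class_def)
  have rank_ak: "prank n (spow (pmult n) a k) = n - 1" "card ({1..n} // C) = n - 1"
    using ak prank_eq_card_ker[OF ak'] prank_eq_card_coker[OF ak'] card_K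
    by (simp_all add: ker_coker_class_def)
  have "prank n a \<noteq> n"
  proof
    assume "prank n a = n"
    then have "a \<in> ker_coker_class n (Id_on {1..n}) (Id_on {1..n})"
      using a ker_coker_eq_Id_on_if_prank_eq[OF a] by (simp add: ker_coker_class_def)
    then have "spow (pmult n) a k \<in> ker_coker_class n (Id_on {1..n}) (Id_on {1..n})"
      by (rule spow_in_subsemigroup[OF subsemigroup_ker_coker_class _ k])
    then have "prank n (spow (pmult n) a k) = n"
      using prank_eq_card_ker[OF ak'] card_quotient_Id_on[of "{1..n}"]
      by (simp add: ker_coker_class_def)
    with rank_ak \<open>n \<noteq> 0\<close> show False
      by simp
  qed
  then have "prank n a \<le> n - 1"
    using prank_le[OF a] by simp
  then have "ker a = K" "coker a = C"
    using equiv_eq_if_card_quotient_le[OF _ ker_equiv[OF a] K \<open>ker a \<subseteq> K\<close>]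
      equiv_eq_if_card_quotient_le[OF _ coker_equiv[OF a] C \<open>coker a \<subseteq> C\<close>]
      card_K rank_ak prank_eq_card_ker[OF a] prank_eq_card_coker[OF a]
    by simp_all
  then show "a \<in> ker_coker_class n K C"
    using a by (simp add: ker_coker_class_def)
qed

theorem mainTheorem11:
  fixes n :: nat and e :: "((nat + nat) \<times> (nat + nat)) set"
  assumes "n \<ge> 2"
    and "e \<in> Istar n"
    and "pmult n e e = e"
    and "prank n e = n - 1"
  shows "subsemigroup (Istar n) (pmult n) (Hclass (Istar n) (pmult n) e)
       \<and> isolated (Istar n) (pmult n) (Hclass (Istar n) (pmult n) e)"
proof -
  have H: "Hclass (Istar n) (pmult n) e = ker_coker_class n (ker e) (ker e)"
    using Hclass_idempotent[OF assms(2,3)] coker_eq_ker_if_idempotent[OF assms(2,3)] by simp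
  have "card ({1..n} // ker e) = n - 1"
    using prank_eq_card_ker[OF assms(2)] assms(4) by simp
  then have "isolated (Istar n) (pmult n) (ker_coker_class n (ker e) (ker e))"
    using assms(1) by (intro isolated_ker_coker_class) simp_all
  then show ?thesis
    using subsemigroup_ker_coker_class H by simp
qed

end
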